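(* For $p=1$ and any $N\ge 1$ and $d\in\mathbb{R}$, the characteristic polynomial of $\mathbf{M}^{-1}\mathbf{K}$ is $$\det\bigl(\lambda I-\mathbf{M}^{-1}\mathbf{K}\bigr)=\bigl(\lambda^2+4\lambda+6\bigr)^{N-1}\bigl(\lambda^2-6\lambda d+4\lambda+6\bigr).$$
   Context: Setting: the linear advection equation $\partial_t u+\partial_x u=s(x)$ (velocity $1$) with a Dirichlet condition $u=u_D$ at the left physical boundary $\bar x$. Uniform mesh of cells $\Omega_e=[x_{e-1/2},x_{e+1/2}]$, $e=1,\dots,N$, with $x_{1/2}=0$ and cell size $\Delta x=1$. On each cell the approximation space is $\mathbb{P}^p(\Omega_e)$ with basis $\{\phi^e_j\}_{j=0}^p$, where $\phi^e_j(x)=\phi_j(x-(e-1))$ are translates of a fixed basis $\{\phi_j\}$ of $\mathbb{P}^p$ on $[0,1]$. Local matrices (indices $i,j=0,\dots,p$, identical for all cells by translation): mass $M_{ij}=\int_{\Omega_e}\phi^e_i\phi^e_j\,dx$; stiffness $K^s_{ij}=\int_{\Omega_e}\partial_x\phi^e_i\,\phi^e_j\,dx$; right interface $K^R_{ij}=\phi^e_i(x_{e+1/2})\phi^e_j(x_{e+1/2})$; left interface coupling $(K^L)_{ij}=\phi^e_i(x_{e-1/2})\phi^{e-1}_j(x_{e-1/2})$. The physical boundary is at $\bar x = x_{1/2}+d$, with $d\in[-1,1]$ ($d<0$: outside the first cell, $d>0$: inside). Shifted boundary polynomial correction with homogeneous data $u_D=0$: the upwind flux at $x_{1/2}$ is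 $u^\star=-\bigl(u_h(x_{1/2}+d)-u_h(x_{1/2})\bigr)$, with $u_h$ the (polynomially extended) solution of cell 1, giving the matrix $K^{SB}_{ij}=-\phi^1_i(x_{1/2})\bigl(\phi^1_j(x_{1/2}+d)-\phi^1_j(x_{1/2})\bigr)$. The semi-discrete system is $\mathbf{M}\,\frac{d\mathbf{U}}{dt}=\mathbf{K}\mathbf{U}$ with $\mathbf{U}=(\mathbf{u}_1,\dots,\mathbf{u}_N)$ the modal coefficient vectors, $\mathbf{M}=\mathrm{diag}(M,\dots,M)$, and $\mathbf{K}$ block lower bidiagonal with diagonal blocks $K^s-K^R+K^{SB}$ (cell 1) and $K^s-K^R$ (cells $2,\dots,N$), subdiagonal blocks $K^L$, all other blocks zero. *)

theory Defs
  imports "HOL-Analysis.Analysis" "HOL-Computational_Algebra.Polynomial"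
    "Jordan_Normal_Form.Char_Poly" "Jordan_Normal_Form.Gauss_Jordan_Elimination"
begin

text \<open>The cell basis is phi^e_j(x) = phi_j(x - (e-1)); cells e = 1..N are indexed
  0-based below as c = e - 1, so cell c is [c, c+1].\<close>

definition cell_basis :: "(nat \<Rightarrow> real poly) \<Rightarrow> nat \<Rightarrow> nat \<Rightarrow> real \<Rightarrow> real" where
  "cell_basis phi e j x = poly (phi j) (x - (real e - 1))"

definition cell_basis_dx :: "(nat \<Rightarrow> real poly) \<Rightarrow> nat \<Rightarrow> nat \<Rightarrow> real \<Rightarrow> real" where
  "cell_basis_dx phi e j x = poly (pderiv (phi j)) (x - (real e - 1))"

text \<open>Local matrices, computed on cell e = 1 (identical for all cells by translation).\<close>

definition massM :: "(nat \<Rightarrow> real poly) \<Rightarrow> nat \<Rightarrow> nat \<Rightarrow> real" where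
  "massM phi i j = integral {0..1} (\<lambda>x. cell_basis phi 1 i x * cell_basis phi 1 j x)"

definition stiffK :: "(nat \<Rightarrow> real poly) \<Rightarrow> nat \<Rightarrow> nat \<Rightarrow> real" where
  "stiffK phi i j = integral {0..1} (\<lambda>x. cell_basis_dx phi 1 i x * cell_basis phi 1 j x)"

definition KR :: "(nat \<Rightarrow> real poly) \<Rightarrow> nat \<Rightarrow> nat \<Rightarrow> real" where
  "KR phi i j = cell_basis phi 1 i 1 * cell_basis phi 1 j 1"

text \<open>Left coupling for cell e = 2: phi^2_i(x_{3/2}) * phi^1_j(x_{3/2}), with x_{3/2} = 1.\<close>
definition KL :: "(nat \<Rightarrow> real poly) \<Rightarrow> nat \<Rightarrow> nat \<Rightarrow> real" where
  "KL phi i j = cell_basis phi 2 i 1 * cell_basis phi 1 j 1"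

text \<open>Shifted boundary matrix; x_{1/2} = 0.\<close>
definition KSB :: "(nat \<Rightarrow> real poly) \<Rightarrow> real \<Rightarrow> nat \<Rightarrow> nat \<Rightarrow> real" where
  "KSB phi d i j = - cell_basis phi 1 i 0 * (cell_basis phi 1 j (0 + d) - cell_basis phi 1 j 0)"

text \<open>Global block matrices (block size p+1) for N cells; global index k corresponds to
  cell k div (p+1) (0-based) and local index k mod (p+1).\<close>

definition globalM :: "nat \<Rightarrow> (nat \<Rightarrow> real poly) \<Rightarrow> nat \<Rightarrow> real mat" where
  "globalM p phi N = mat (N * (p+1)) (N * (p+1)) (\<lambda>(r, c).
     if r div (p+1) = c div (p+1) then massM phi (r mod (p+1)) (c mod (p+1)) else 0)"

definition globalK :: "nat \<Rightarrow> (nat \<Rightarrow> real poly) \<Rightarrow> real \<Rightarrow> nat \<Rightarrow> real mat" where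
  "globalK p phi d N = mat (N * (p+1)) (N * (p+1)) (\<lambda>(r, c).
     let er = r div (p+1); ec = c div (p+1); i = r mod (p+1); j = c mod (p+1) in
     if er = ec then
        stiffK phi i j - KR phi i j + (if er = 0 then KSB phi d i j else 0)
     else if er = ec + 1 then KL phi i j
     else 0)"

definition is_Pp_basis :: "nat \<Rightarrow> (nat \<Rightarrow> real poly) \<Rightarrow> bool" where
  "is_Pp_basis p phi \<longleftrightarrow> (\<forall>j\<le>p. degree (phi j) \<le> p) \<and>
     (\<forall>c :: nat \<Rightarrow> real. (\<Sum>j\<le>p. Polynomial.smult (c j) (phi j)) = 0 \<longrightarrow> (\<forall>j\<le>p. c j = 0))"

end

theory Submission
  imports Defs
begin

text \<open>Both global matrices are block lower bidiagonal with the same block pattern, so the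
  pencil \<open>\<lambda>M - K\<close> is too, and its determinant is the product of the determinants of its
  diagonal blocks; the coupling blocks never enter. Since \<open>det (\<lambda>M - K) = det M \<cdot> det (\<lambda>I - M\<inverse>K)\<close>
  and \<open>det M\<close> is the \<open>N\<close>-th power of the local mass determinant, it remains to compute
  two \<open>2 \<times> 2\<close> pencil determinants. For a \<open>P\<^sup>1\<close> basis \<open>\<phi>\<^sub>j = a\<^sub>j + b\<^sub>j x\<close> the local mass
  determinant is \<open>(a\<^sub>0b\<^sub>1 - a\<^sub>1b\<^sub>0)\<^sup>2/12 \<noteq> 0\<close>, and the local pencil determinant is that number times
  \<open>\<lambda>\<^sup>2 + (4 - 6d)\<lambda> + 6\<close> (with \<open>d = 0\<close> in the interior cells), independently of the basis.\<close>

definition block_bidiag :: "nat \<Rightarrow> nat \<Rightarrow> 'a mat \<Rightarrow> 'a mat \<Rightarrow> 'a mat \<Rightarrow> 'a :: zero mat" where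
  "block_bidiag k N B0 B C = mat (N * k) (N * k) (\<lambda>(r, c).
     if r div k = c div k then (if r div k = 0 then B0 else B) $$ (r mod k, c mod k)
     else if r div k = c div k + 1 then C $$ (r mod k, c mod k)
     else 0)"

lemma dim_block_bidiag [simp]:
  "dim_row (block_bidiag k N B0 B C) = N * k" "dim_col (block_bidiag k N B0 B C) = N * k"
  by (simp_all add: block_bidiag_def)

lemma block_bidiag_carrier [simp]: "block_bidiag k N B0 B C \<in> carrier_mat (N * k) (N * k)"
  by (simp add: block_bidiag_def)

lemma block_bidiag_Suc:
  assumes "B0 \<in> carrier_mat k k"
  shows "block_bidiag k (Suc N) B0 B C = four_block_mat B0 (0\<^sub>m k (N * k))
           (mat (N * k) k (\<lambda>(r, c). if r < k then C $$ (r, c) else 0)) (block_bidiag k N B B C)"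
    (is "_ = ?F")
proof (rule eq_matI)
  fix i j assume "i < dim_row ?F" "j < dim_col ?F"
  then have i: "i < k + N * k" and j: "j < k + N * k" using assms by auto
  then have "0 < k" by (cases k) auto
  then have low: "r div k = 0" "r mod k = r" if "r < k" for r
    using that by simp_all
  have high: "r div k = Suc ((r - k) div k)" "r mod k = (r - k) mod k" if "k \<le> r" for r
    using that \<open>0 < k\<close> by (simp_all add: le_div_geq le_mod_geq)
  have entry: "block_bidiag k (Suc N) B0 B C $$ (i, j) =
      (if i div k = j div k then (if i div k = 0 then B0 else B) $$ (i mod k, j mod k)
       else if i div k = j div k + 1 then C $$ (i mod k, j mod k) else 0)"
    using i j by (simp add: block_bidiag_def)
  show "block_bidiag k (Suc N) B0 B C $$ (i, j) = ?F $$ (i, j)"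
  proof (cases "i < k"; cases "j < k")
    assume "i < k" "j < k"
    then show ?thesis using assms by (simp add: entry low)
  next
    assume "i < k" "\<not> j < k"
    then show ?thesis using assms j by (simp add: entry low(1) high(1)[of j])
  next
    assume "\<not> i < k" "j < k"
    then show ?thesis using assms i by (simp add: entry low high[of i] div_eq_0_iff)
  next
    assume "\<not> i < k" "\<not> j < k"
    then show ?thesis using assms i j by (simp add: entry high[of i] high[of j] block_bidiag_def)
  qed
qed (use assms in auto)

lemma det_block_bidiag_Suc:
  fixes B0 :: "'a :: idom mat"
  assumes "B0 \<in> carrier_mat k k"
  shows "det (block_bidiag k (Suc N) B0 B C) = det B0 * det (block_bidiag k N B B C)"
  unfolding block_bidiag_Suc[OF assms]
  by (rule det_four_block_mat_upper_right_zero[of _ k _ "N * k"]) (use assms in auto)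

lemma det_block_bidiag:
  fixes B0 B :: "'a :: idom mat"
  assumes "B0 \<in> carrier_mat k k" and "B \<in> carrier_mat k k"
  shows "det (block_bidiag k (Suc N) B0 B C) = det B0 * det B ^ N"
  using assms(1)
proof (induction N arbitrary: B0)
  case 0
  have "det (block_bidiag k 0 B B C) = 1" by (simp add: block_bidiag_def det_def)
  with 0 show ?case by (simp add: det_block_bidiag_Suc)
next
  case (Suc N)
  with assms(2) show ?case by (simp add: det_block_bidiag_Suc)
qed

interpretation const_poly_hom: comm_ring_hom "\<lambda>a :: 'a :: comm_ring_1. [:a:]"
  by unfold_locales (simp_all add: one_pCons)

definition pencil :: "'a :: comm_ring_1 mat \<Rightarrow> 'a mat \<Rightarrow> 'a poly mat" where
  "pencil G K = [:0, 1:] \<cdot>\<^sub>m map_mat (\<lambda>a. [:a:]) G - map_mat (\<lambda>a. [:a:]) K"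

lemma pencil_carrier [simp]: "K \<in> carrier_mat n m \<Longrightarrow> pencil G K \<in> carrier_mat n m"
  by (simp add: pencil_def minus_mat_def)

lemma char_poly_matrix_eq_pencil:
  "A \<in> carrier_mat n n \<Longrightarrow> char_poly_matrix A = pencil (1\<^sub>m n) A"
  by (rule eq_matI) (auto simp: char_poly_matrix_def pencil_def)

lemma const_poly_mult_pencil_one:
  assumes "G \<in> carrier_mat n n" and "A \<in> carrier_mat n n"
  shows "map_mat (\<lambda>a. [:a:]) G * pencil (1\<^sub>m n) A = pencil G (G * A)"
proof -
  have "map_mat (\<lambda>a. [:a:]) G * ([:0, 1:] \<cdot>\<^sub>m 1\<^sub>m n) = [:0, 1:] \<cdot>\<^sub>m map_mat (\<lambda>a. [:a:]) G"
    using assms by (subst mult_smult_distrib[where n = n and nc = n]) auto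
  then show ?thesis
    using assms by (simp add: pencil_def mult_minus_distrib_mat[of _ n n _ n]
        const_poly_hom.mat_hom_mult[symmetric] const_poly_hom.mat_hom_one)
qed

lemma det_pencil_eq_char_poly:
  fixes G K :: "'a :: field mat"
  assumes G: "G \<in> carrier_mat n n" and K: "K \<in> carrier_mat n n"
    and inv: "mat_inverse G = Some Gi"
  shows "det (pencil G K) = [:det G:] * char_poly (Gi * K)"
proof -
  have Gi: "G * Gi = 1\<^sub>m n" "Gi \<in> carrier_mat n n"
    using mat_inverse(2)[OF G inv] by auto
  have "G * (Gi * K) = K"
    using assoc_mult_mat[OF G Gi(2) K] Gi K by simp
  then have "pencil G K = map_mat (\<lambda>a. [:a:]) G * char_poly_matrix (Gi * K)"
    using G Gi K by (simp add: char_poly_matrix_eq_pencil[of _ n] const_poly_mult_pencil_one)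
  then show ?thesis
    using G Gi K by (simp add: char_poly_def det_mult[of _ n])
qed

lemma mat_inverse_exists:
  fixes G :: "'a :: field mat"
  assumes "G \<in> carrier_mat n n" and "det G \<noteq> 0"
  obtains Gi where "mat_inverse G = Some Gi"
  using mat_inverse(1)[OF assms(1), of undefined] det_non_zero_imp_unit[OF assms] by fastforce

lemma pencil_block_bidiag:
  assumes "G0 \<in> carrier_mat k k" "G \<in> carrier_mat k k" "GC \<in> carrier_mat k k"
    and "K0 \<in> carrier_mat k k" "K \<in> carrier_mat k k" "KC \<in> carrier_mat k k"
  shows "pencil (block_bidiag k N G0 G GC) (block_bidiag k N K0 K KC)
       = block_bidiag k N (pencil G0 K0) (pencil G K) (pencil GC KC)"
proof (rule eq_matI)
  fix i j assume "i < dim_row (block_bidiag k N (pencil G0 K0) (pencil G K) (pencil GC KC))"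
    "j < dim_col (block_bidiag k N (pencil G0 K0) (pencil G K) (pencil GC KC))"
  then have "i < N * k" "j < N * k" by simp_all
  moreover from this have "i mod k < k" "j mod k < k" by (cases k; simp)+
  ultimately show "pencil (block_bidiag k N G0 G GC) (block_bidiag k N K0 K KC) $$ (i, j)
       = block_bidiag k N (pencil G0 K0) (pencil G K) (pencil GC KC) $$ (i, j)"
    using assms by (simp add: pencil_def block_bidiag_def minus_mat_def)
qed (simp_all add: pencil_def minus_mat_def)

lemma char_poly_inverse_mult_block_bidiag:
  fixes M F0 F C :: "'a :: field mat"
  assumes M: "M \<in> carrier_mat k k" and F0: "F0 \<in> carrier_mat k k" and F: "F \<in> carrier_mat k k"
    and C: "C \<in> carrier_mat k k" and "det M \<noteq> 0"
  shows "[:det M ^ Suc n:] * char_poly (the (mat_inverse (block_bidiag k (Suc n) M M (0\<^sub>m k k)))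
           * block_bidiag k (Suc n) F0 F C)
         = det (pencil M F0) * det (pencil M F) ^ n"
proof -
  let ?G = "block_bidiag k (Suc n) M M (0\<^sub>m k k)" and ?K = "block_bidiag k (Suc n) F0 F C"
  have "det ?G = det M ^ Suc n"
    using M by (simp add: det_block_bidiag)
  with \<open>det M \<noteq> 0\<close> obtain Gi where inv: "mat_inverse ?G = Some Gi"
    using mat_inverse_exists[OF block_bidiag_carrier] by (metis power_not_zero)
  have "det (pencil ?G ?K) = [:det M ^ Suc n:] * char_poly (Gi * ?K)"
    using det_pencil_eq_char_poly[OF block_bidiag_carrier block_bidiag_carrier inv]
      \<open>det ?G = det M ^ Suc n\<close> by simp
  moreover have "det (pencil ?G ?K) = det (pencil M F0) * det (pencil M F) ^ n"
    unfolding pencil_block_bidiag[OF M M zero_carrier_mat F0 F C]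
    by (rule det_block_bidiag) (use F0 F in auto)
  ultimately show ?thesis using inv by simp
qed

definition local_mass :: "nat \<Rightarrow> (nat \<Rightarrow> real poly) \<Rightarrow> real mat" where
  "local_mass p phi = mat (p + 1) (p + 1) (\<lambda>(i, j). massM phi i j)"

definition local_flux :: "nat \<Rightarrow> (nat \<Rightarrow> real poly) \<Rightarrow> real \<Rightarrow> real mat" where
  "local_flux p phi d = mat (p + 1) (p + 1) (\<lambda>(i, j). stiffK phi i j - KR phi i j + KSB phi d i j)"

definition local_coupling :: "nat \<Rightarrow> (nat \<Rightarrow> real poly) \<Rightarrow> real mat" where
  "local_coupling p phi = mat (p + 1) (p + 1) (\<lambda>(i, j). KL phi i j)"

lemma globalM_eq_block_bidiag:
  "globalM p phi N = block_bidiag (p + 1) N (local_mass p phi) (local_mass p phi) (0\<^sub>m (p + 1) (p + 1))"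
  by (rule eq_matI) (auto simp: globalM_def block_bidiag_def local_mass_def)

text \<open>Interior cells carry no shifted-boundary term: their flux is the cell-one flux at \<open>d = 0\<close>,
  where \<open>KSB\<close> vanishes.\<close>

lemma globalK_eq_block_bidiag:
  "globalK p phi d N = block_bidiag (p + 1) N (local_flux p phi d) (local_flux p phi 0) (local_coupling p phi)"
  by (rule eq_matI) (auto simp: globalK_def block_bidiag_def local_flux_def local_coupling_def KSB_def Let_def)

lemma det_2x2:
  fixes A :: "'a :: comm_ring_1 mat"
  assumes "A \<in> carrier_mat 2 2"
  shows "det A = A $$ (0, 0) * A $$ (1, 1) - A $$ (0, 1) * A $$ (1, 0)"
proof -
  have "dim_row A = 2" "dim_col A = 2" using assms by auto
  with laplace_expansion_row[OF assms, of 0] show ?thesis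
    by (simp add: eval_nat_numeral cofactor_def det_single mat_delete_def)
qed

lemma pencil_index [simp]:
  assumes "i < dim_row K" "j < dim_col K" "i < dim_row G" "j < dim_col G"
  shows "pencil G K $$ (i, j) = [:- K $$ (i, j), G $$ (i, j):]"
  using assms by (simp add: pencil_def minus_mat_def)

lemma degree_le_1_eq: "degree (q :: 'a :: zero poly) \<le> 1 \<Longrightarrow> q = [:coeff q 0, coeff q 1:]"
  by (rule poly_eqI) (auto simp: coeff_pCons coeff_eq_0 split: nat.split)

lemma sum_atMost_one: "(\<Sum>j\<le>(1::nat). f j) = f 0 + (f 1 :: 'a :: comm_monoid_add)"
  by (simp add: atLeast0AtMost[symmetric] numeral_eq_Suc)

lemma P1_basis_coeffs:
  assumes "is_Pp_basis 1 phi"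
  obtains a0 b0 a1 b1 where "phi 0 = [:a0, b0:]" "phi 1 = [:a1, b1:]" "a0 * b1 - a1 * b0 \<noteq> 0"
proof -
  have deg: "degree (phi 0) \<le> 1" "degree (phi 1) \<le> 1"
    using assms unfolding is_Pp_basis_def by auto
  obtain a0 b0 a1 b1 where phi: "phi 0 = [:a0, b0:]" "phi 1 = [:a1, b1:]"
    using degree_le_1_eq[OF deg(1)] degree_le_1_eq[OF deg(2)] by blast
  have indep: "c0 = 0 \<and> c1 = 0"
    if "Polynomial.smult c0 (phi 0) + Polynomial.smult c1 (phi 1) = 0" for c0 c1
  proof -
    let ?c = "\<lambda>j :: nat. if j = 0 then c0 else c1"
    have sum: "(\<Sum>j\<le>1. Polynomial.smult (?c j) (phi j)) = 0"
      unfolding sum_atMost_one using that by simp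
    have indep_all: "\<forall>c. (\<Sum>j\<le>1. Polynomial.smult (c j) (phi j)) = 0 \<longrightarrow> (\<forall>j\<le>1. c j = 0)"
      using assms unfolding is_Pp_basis_def by blast
    from spec[OF indep_all, of ?c] sum have "\<forall>j\<le>1. ?c j = 0" by (rule mp)
    then have "?c 0 = 0" "?c 1 = 0" by (simp_all only: le_refl zero_le)
    then show ?thesis by simp
  qed
  have "a0 * b1 - a1 * b0 \<noteq> 0"
  proof
    assume "a0 * b1 - a1 * b0 = 0"
    then have "Polynomial.smult b1 (phi 0) + Polynomial.smult (- b0) (phi 1) = 0"
      and "Polynomial.smult a1 (phi 0) + Polynomial.smult (- a0) (phi 1) = 0"
      unfolding phi by (simp_all add: algebra_simps)
    then have "b0 = 0" "a0 = 0" using indep[of b1 "- b0"] indep[of a1 "- a0"] by simp_all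
    then have "phi 0 = 0" by (simp add: phi)
    then show False using indep[of 1 0] by simp
  qed
  with phi that show ?thesis by blast
qed

lemma integral_01_linear_product:
  "integral {0..1} (\<lambda>x :: real. (a + x * b) * (c + x * e)) = a * c + (a * e + b * c) / 2 + b * e / 3"
proof -
  let ?F = "\<lambda>x :: real. a * c * x + (a * e + b * c) * x^2 / 2 + b * e * x^3 / 3"
  have "((\<lambda>x. (a + x * b) * (c + x * e)) has_integral (?F 1 - ?F 0)) {0..1}"
  proof (rule fundamental_theorem_of_calculus)
    fix x :: real
    have "(?F has_real_derivative (a + x * b) * (c + x * e)) (at x within {0..1})"
      by (auto intro!: derivative_eq_intros simp: algebra_simps power2_eq_square)
    then show "(?F has_vector_derivative (a + x * b) * (c + x * e)) (at x within {0..1})"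
      by (simp add: has_real_derivative_iff_has_vector_derivative)
  qed simp
  then show ?thesis by (simp add: integral_unique)
qed

lemma P1_local_entries:
  assumes "phi i = [:ai, bi:]" and "phi j = [:aj, bj:]"
  shows "massM phi i j = ai * aj + (ai * bj + bi * aj) / 2 + bi * bj / 3"
    and "stiffK phi i j - KR phi i j + KSB phi d i j = bi * aj + bi * bj / 2 - (ai + bi) * (aj + bj) - ai * bj * d"
proof -
  show "massM phi i j = ai * aj + (ai * bj + bi * aj) / 2 + bi * bj / 3"
    using assms integral_01_linear_product[of ai bi aj bj] by (simp add: massM_def cell_basis_def)
  have "stiffK phi i j = integral {0..1} (\<lambda>x :: real. (bi + x * 0) * (aj + x * bj))"
    using assms by (simp add: stiffK_def cell_basis_def cell_basis_dx_def pderiv_pCons)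
  then show "stiffK phi i j - KR phi i j + KSB phi d i j = bi * aj + bi * bj / 2 - (ai + bi) * (aj + bj) - ai * bj * d"
    using assms integral_01_linear_product[of bi 0 aj bj]
    by (simp add: KR_def KSB_def cell_basis_def algebra_simps)
qed

lemma det_local_mass_1:
  "det (local_mass 1 phi) = massM phi 0 0 * massM phi 1 1 - massM phi 0 1 * massM phi 1 0"
proof -
  have "local_mass 1 phi \<in> carrier_mat 2 2" by (simp add: local_mass_def numeral_2_eq_2)
  then show ?thesis by (simp add: det_2x2 local_mass_def)
qed

lemma det_local_mass_P1:
  assumes "phi 0 = [:a0, b0:]" and "phi 1 = [:a1, b1:]"
  shows "det (local_mass 1 phi) = (a0 * b1 - a1 * b0)^2 / 12"
proof -
  note entries = P1_local_entries[where phi = phi]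
  have "det (local_mass 1 phi) = massM phi 0 0 * massM phi 1 1 - massM phi 0 1 * massM phi 1 0"
    by (rule det_local_mass_1)
  also have "\<dots> = (a0 * b1 - a1 * b0)^2 / 12"
    unfolding entries(1)[OF assms(1) assms(1)] entries(1)[OF assms(1) assms(2)]
      entries(1)[OF assms(2) assms(1)] entries(1)[OF assms(2) assms(2)]
    by (simp add: field_simps power2_eq_square; algebra)
  finally show ?thesis .
qed

lemma det_local_pencil_P1:
  assumes "phi 0 = [:a0, b0:]" and "phi 1 = [:a1, b1:]"
  shows "det (pencil (local_mass 1 phi) (local_flux 1 phi d)) = [:det (local_mass 1 phi):] * [:6, 4 - 6 * d, 1:]"
proof -
  note entries = P1_local_entries[where phi = phi]
  let ?F = "\<lambda>i j. stiffK phi i j - KR phi i j + KSB phi d i j"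
  let ?P = "pencil (local_mass 1 phi) (local_flux 1 phi d)"
  have "?P \<in> carrier_mat 2 2" by (simp add: local_flux_def numeral_2_eq_2)
  then have "det ?P = [:- ?F 0 0, massM phi 0 0:] * [:- ?F 1 1, massM phi 1 1:]
                    - [:- ?F 0 1, massM phi 0 1:] * [:- ?F 1 0, massM phi 1 0:]"
    by (simp add: det_2x2 local_mass_def local_flux_def)
  also have "\<dots> = [:massM phi 0 0 * massM phi 1 1 - massM phi 0 1 * massM phi 1 0:] * [:6, 4 - 6 * d, 1:]"
    unfolding entries[OF assms(1) assms(1)] entries[OF assms(1) assms(2)]
      entries[OF assms(2) assms(1)] entries[OF assms(2) assms(2)]
    by (simp add: algebra_simps) (simp add: field_simps; algebra)
  also have "massM phi 0 0 * massM phi 1 1 - massM phi 0 1 * massM phi 1 0 = det (local_mass 1 phi)"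
    by (rule det_local_mass_1[symmetric])
  finally show ?thesis .
qed

theorem mainTheorem2:
  fixes phi :: "nat \<Rightarrow> real poly" and N :: nat and d :: real
  assumes "is_Pp_basis 1 phi" and "N \<ge> 1"
  shows "char_poly (the (mat_inverse (globalM 1 phi N)) * globalK 1 phi d N)
           = [:6, 4, 1:] ^ (N - 1) * [:6, 4 - 6 * d, 1:]"
proof -
  obtain a0 b0 a1 b1 where phi: "phi 0 = [:a0, b0:]" "phi 1 = [:a1, b1:]"
    and nonsingular: "a0 * b1 - a1 * b0 \<noteq> 0"
    using P1_basis_coeffs[OF assms(1)] by blast
  obtain n where N: "N = Suc n" using assms(2) by (cases N) auto
  define m where "m = det (local_mass 1 phi)"
  have "m \<noteq> 0" unfolding m_def det_local_mass_P1[OF phi] using nonsingular by simp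
  have carrier: "local_mass 1 phi \<in> carrier_mat 2 2" "local_flux 1 phi t \<in> carrier_mat 2 2"
    "local_coupling 1 phi \<in> carrier_mat 2 2" for t
    by (simp_all add: local_mass_def local_flux_def local_coupling_def numeral_2_eq_2)
  let ?A = "the (mat_inverse (globalM 1 phi N)) * globalK 1 phi d N"
  have "[:m ^ N:] * char_poly ?A
      = det (pencil (local_mass 1 phi) (local_flux 1 phi d)) * det (pencil (local_mass 1 phi) (local_flux 1 phi 0)) ^ n"
    unfolding globalM_eq_block_bidiag globalK_eq_block_bidiag one_add_one N m_def
    by (rule char_poly_inverse_mult_block_bidiag[OF carrier(1) carrier(2) carrier(2) carrier(3)])
      (use \<open>m \<noteq> 0\<close> in \<open>simp add: m_def\<close>)
  also have "\<dots> = [:m:] * [:6, 4 - 6 * d, 1:] * ([:m:] * [:6, 4, 1:]) ^ n"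
    using det_local_pencil_P1[OF phi, of d] det_local_pencil_P1[OF phi, of 0] by (simp add: m_def)
  also have "\<dots> = [:m ^ N:] * ([:6, 4, 1:] ^ (N - 1) * [:6, 4 - 6 * d, 1:])"
    unfolding N diff_Suc_1 power_mult_distrib power_Suc mult_to_poly[symmetric] poly_const_pow[symmetric]
    by (simp only: mult_ac)
  finally show ?thesis
    using \<open>m \<noteq> 0\<close> mult_left_cancel[of "[:m ^ N:]"] by simp
qed

end
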